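(* Let $M\ge1$ and $m_0\ge1$ be integers. For each $i\in\{1,\dots,M\}$ let $A_i\in\mathbb{R}^{n_i\times n_i}$, $B_i,F_i\in\mathbb{R}^{n_i\times m_0}$, $C_i\in\mathbb{R}^{m_0\times n_i}$, let $\mathcal{N}_i^-\subseteq\{1,\dots,M\}\setminus\{i\}$ and $l_{ij}\in\mathbb{R}$ for $j\in\mathcal{N}_i^-$, and consider the interconnected discrete-time system $$x_i^+=A_ix_i+B_iu_i+F_iv_i,\quad y_i=C_ix_i,\quad v_i=\sum_{j\in\mathcal{N}_i^-}l_{ij}(y_j-y_i),\qquad i=1,\dots,M.$$ Let $n=\sum_in_i$, $m=Mm_0$, $C=\operatorname{diag}(C_1,\dots,C_M)$, and let $\tilde L\in\mathbb{R}^{m\times m}$ be the block matrix with $m_0\times m_0$ blocks $\tilde L_{ii}=\big(\sum_{j\in\mathcal{N}_i^-}l_{ij}\big)I_{m_0}$, $\tilde L_{ij}=-l_{ij}I_{m_0}$ for $j\in\mathcal{N}_i^-$, and $\tilde L_{ij}=0$ otherwise; assume $w^\top\tilde Lw\ge0$ for all $w\in\mathbb{R}^m$. Let $U=\tilde LC\in\mathbb{R}^{m\times n}$ and $W=C^\top\tilde L^\top\in\mathbb{R}^{n\times m}$, and partition them into block rows $U=[U_1^\top,\dots,U_M^\top]^\top$ with $U_i\in\mathbb{R}^{m_0\times n}$ and $W=[W_1^\top,\dots,W_M^\top]^\top$ with $W_i\in\mathbb{R}^{n_i\times m}$. Fix $\epsilon_0>0$ and $\epsilon_i>0$ for $i=1,\dots,M$.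 Suppose that for every $i\in\{1,\dots,M\}$ there exist $S_i\in\mathbb{R}^{m_0\times m_0}$, $G_i\in\mathbb{R}^{m_0\times n_i}$, symmetric $E_i\in\mathbb{R}^{n_i\times n_i}$ and $H_i\in\mathbb{R}^{n_i\times n_i}$ satisfying: (i) $E_i\succeq\epsilon_iI_{n_i}$; (ii) $H_i$ and $S_i$ are diagonal with strictly positive diagonal entries; (iii) $$\begin{bmatrix} E_i & \tfrac12 E_iC_i^\top & (A_iE_i+B_iG_i)^\top & E_i\\ \tfrac12 C_iE_i & \tfrac12 S_i+\tfrac12 S_i^\top & F_i^\top & 0\\ A_iE_i+B_iG_i & F_i & E_i & 0\\ E_i & 0 & 0 & H_i \end{bmatrix}\succeq 0;$$ (iv) $[H_i]_j\le\dfrac{1}{|W_i|_j+\epsilon_0}$ for all $j\in\{1,\dots,n_i\}$; (v) $[S_i]_k\le\dfrac{1}{|U_i|_k}$ for all $k\in\{1,\dots,m_0\}$ with $|U_i|_k>0$. Then the decentralized control laws $u_i=K_ix_i$ with $K_i=G_iE_i^{-1}$, $i=1,\dots,M$, render the origin of the global closed-loop system asymptotically stable.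
   Context: For a matrix $T$, $[T]_j$ denotes its $j$-th diagonal entry and $|T|_j$ the $1$-norm (sum of absolute values of entries) of its $j$-th row. $I_k$ is the $k\times k$ identity matrix and $M\succeq0$ means the symmetric matrix $M$ is positive semidefinite. The global closed-loop system is $x_i^+=(A_i+B_iK_i)x_i+F_iv_i$, $i=1,\dots,M$, with $v_i$ given by the coupling formula. *)

theory Defs
  imports "Jordan_Normal_Form.Matrix"
begin

(* Subsystems are indexed by i < M (0-based), and matrix entries are 0-based. *)

definition psd_mat :: "real mat \<Rightarrow> bool" where
  "psd_mat P \<longleftrightarrow> P \<in> carrier_mat (dim_row P) (dim_row P) \<and> transpose_mat P = P \<and>
     (\<forall>x \<in> carrier_vec (dim_row P). 0 \<le> x \<bullet> (P *\<^sub>v x))"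

definition mat_inv :: "real mat \<Rightarrow> real mat" where
  "mat_inv E = (SOME B. B \<in> carrier_mat (dim_row E) (dim_row E) \<and>
                    E * B = 1\<^sub>m (dim_row E) \<and> B * E = 1\<^sub>m (dim_row E))"

definition row_norm1 :: "real mat \<Rightarrow> nat \<Rightarrow> real" where
  "row_norm1 T j = (\<Sum>c<dim_col T. \<bar>T $$ (j, c)\<bar>)"

(* offset of subsystem i in the stacked state *)
definition offs :: "(nat \<Rightarrow> nat) \<Rightarrow> nat \<Rightarrow> nat" where
  "offs nn i = (\<Sum>j<i. nn j)"

(* C = diag(C_0,...,C_{M-1}), an (M*m0) x (sum nn) matrix *)
definition Cglob :: "nat \<Rightarrow> nat \<Rightarrow> (nat \<Rightarrow> nat) \<Rightarrow> (nat \<Rightarrow> real mat) \<Rightarrow> real mat" where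
  "Cglob M m0 nn C = mat (M * m0) (offs nn M) (\<lambda>(r, c).
      let i = r div m0; k = r mod m0 in
      if offs nn i \<le> c \<and> c < offs nn i + nn i then C i $$ (k, c - offs nn i) else 0)"

definition Ltil :: "nat \<Rightarrow> nat \<Rightarrow> (nat \<Rightarrow> nat set) \<Rightarrow> (nat \<Rightarrow> nat \<Rightarrow> real) \<Rightarrow> real mat" where
  "Ltil M m0 N l = mat (M * m0) (M * m0) (\<lambda>(r, c).
      let i = r div m0; j = c div m0 in
      if r mod m0 = c mod m0 then
        (if i = j then (\<Sum>j'\<in>N i. l i j') else if j \<in> N i then - l i j else 0)
      else 0)"

definition gnorm :: "nat \<Rightarrow> (nat \<Rightarrow> real vec) \<Rightarrow> real" where
  "gnorm M x = sqrt (\<Sum>i<M. \<Sum>k<dim_vec (x i). (x i $ k)\<^sup>2)"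

definition cl_traj ::
  "nat \<Rightarrow> (nat \<Rightarrow> nat) \<Rightarrow> (nat \<Rightarrow> real mat) \<Rightarrow> (nat \<Rightarrow> real mat) \<Rightarrow> (nat \<Rightarrow> real mat)
   \<Rightarrow> (nat \<Rightarrow> real mat) \<Rightarrow> (nat \<Rightarrow> real mat) \<Rightarrow> (nat \<Rightarrow> nat set) \<Rightarrow> (nat \<Rightarrow> nat \<Rightarrow> real)
   \<Rightarrow> (nat \<Rightarrow> nat \<Rightarrow> real vec) \<Rightarrow> bool" where
  "cl_traj M nn A B F C K N l x \<longleftrightarrow>
     (\<forall>t. \<forall>i<M. x t i \<in> carrier_vec (nn i)) \<and>
     (\<forall>t. \<forall>i<M. x (Suc t) i =
        (A i + B i * K i) *\<^sub>v x t i +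
        F i *\<^sub>v vec (dim_row (C i)) (\<lambda>k.
                 \<Sum>j\<in>N i. l i j * ((C j *\<^sub>v x t j) $ k - (C i *\<^sub>v x t i) $ k)))"

definition cl_asymp_stable ::
  "nat \<Rightarrow> (nat \<Rightarrow> nat) \<Rightarrow> (nat \<Rightarrow> real mat) \<Rightarrow> (nat \<Rightarrow> real mat) \<Rightarrow> (nat \<Rightarrow> real mat)
   \<Rightarrow> (nat \<Rightarrow> real mat) \<Rightarrow> (nat \<Rightarrow> real mat) \<Rightarrow> (nat \<Rightarrow> nat set) \<Rightarrow> (nat \<Rightarrow> nat \<Rightarrow> real) \<Rightarrow> bool" where
  "cl_asymp_stable M nn A B F C K N l \<longleftrightarrow>
     (\<forall>e>0. \<exists>d>0. \<forall>x. cl_traj M nn A B F C K N l x \<longrightarrow> gnorm M (x 0) < d \<longrightarrow>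
         (\<forall>t. gnorm M (x t) < e)) \<and>
     (\<exists>d>0. \<forall>x. cl_traj M nn A B F C K N l x \<longrightarrow> gnorm M (x 0) < d \<longrightarrow>
         (\<lambda>t. gnorm M (x t)) \<longlonglongrightarrow> 0)"

end

theory Submission
  imports Defs "Jordan_Normal_Form.Determinant"
begin

(* With P_i = E_i^-1, which exists since E_i >= eps_i I, the function
   V(x) = sum_i x_i' P_i x_i is a Lyapunov function of the closed loop. Evaluating the LMI (iii)
   at the vector (P_i x_i, v_i, -P_i x_i^+, -H_i^-1 x_i) gives the local dissipation inequality
     x_i^+' P_i x_i^+ <= x_i' P_i x_i + y_i' v_i + v_i' S_i v_i - x_i' H_i^-1 x_i,   y_i = C_i x_i.
   Summed over i, the cross terms add up to -y' L y <= 0 because v = -L y; by (v) and a weighted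
   Cauchy-Schwarz inequality, row by row of U = L C, the terms v_i' S_i v_i are bounded by
   sum_c |W|_c x_c^2; and (iv) turns the remainder into V(x^+) <= V(x) - eps0 |x|^2.
   As 0 <= V(x) <= (sum_i 1/eps_i) |x|^2, this yields stability, and the summability of
   |x(t)|^2 yields attractivity. *)

section \<open>Inequalities for finite sums\<close>

lemma weighted_Cauchy_Schwarz:
  fixes u X :: "'i \<Rightarrow> real"
  shows "(\<Sum>c\<in>I. u c * X c)\<^sup>2 \<le> (\<Sum>c\<in>I. \<bar>u c\<bar>) * (\<Sum>c\<in>I. \<bar>u c\<bar> * (X c)\<^sup>2)"
proof -
  have "(\<Sum>c\<in>I. u c * X c)\<^sup>2 = (\<Sum>c\<in>I. \<Sum>d\<in>I. (u c * X c) * (u d * X d))"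
    by (simp add: power2_eq_square sum_product)
  also have "\<dots> \<le> (\<Sum>c\<in>I. \<Sum>d\<in>I. (\<bar>u c\<bar> * (X c)\<^sup>2 * \<bar>u d\<bar> + \<bar>u c\<bar> * (\<bar>u d\<bar> * (X d)\<^sup>2)) / 2)"
  proof (intro sum_mono)
    fix c d
    have "(u c * X c) * (u d * X d) \<le> \<bar>u c\<bar> * \<bar>u d\<bar> * (\<bar>X c\<bar> * \<bar>X d\<bar>)"
      using abs_ge_self[of "(u c * X c) * (u d * X d)"] by (simp add: abs_mult ac_simps)
    also have "\<dots> \<le> \<bar>u c\<bar> * \<bar>u d\<bar> * (((X c)\<^sup>2 + (X d)\<^sup>2) / 2)"
    proof (intro mult_left_mono)
      have "0 \<le> (\<bar>X c\<bar> - \<bar>X d\<bar>)\<^sup>2" by simp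
      then show "\<bar>X c\<bar> * \<bar>X d\<bar> \<le> ((X c)\<^sup>2 + (X d)\<^sup>2) / 2"
        by (simp add: power2_eq_square algebra_simps)
    qed simp
    finally show "(u c * X c) * (u d * X d)
        \<le> (\<bar>u c\<bar> * (X c)\<^sup>2 * \<bar>u d\<bar> + \<bar>u c\<bar> * (\<bar>u d\<bar> * (X d)\<^sup>2)) / 2"
      by (simp add: algebra_simps)
  qed
  also have "\<dots> = ((\<Sum>c\<in>I. \<bar>u c\<bar> * (X c)\<^sup>2) * (\<Sum>d\<in>I. \<bar>u d\<bar>)
                   + (\<Sum>c\<in>I. \<bar>u c\<bar>) * (\<Sum>d\<in>I. \<bar>u d\<bar> * (X d)\<^sup>2)) / 2"
    by (simp only: add_divide_distrib sum.distrib sum_product flip: sum_divide_distrib)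
  also have "\<dots> = (\<Sum>c\<in>I. \<bar>u c\<bar>) * (\<Sum>c\<in>I. \<bar>u c\<bar> * (X c)\<^sup>2)" by simp
  finally show ?thesis .
qed

lemma weighted_square_le_row_norm:
  fixes u X :: "'i \<Rightarrow> real"
  assumes "0 \<le> s" "s * (\<Sum>c\<in>I. \<bar>u c\<bar>) \<le> 1"
  shows "s * (\<Sum>c\<in>I. u c * X c)\<^sup>2 \<le> (\<Sum>c\<in>I. \<bar>u c\<bar> * (X c)\<^sup>2)"
proof -
  have "s * (\<Sum>c\<in>I. u c * X c)\<^sup>2 \<le> s * (\<Sum>c\<in>I. \<bar>u c\<bar>) * (\<Sum>c\<in>I. \<bar>u c\<bar> * (X c)\<^sup>2)"
    using mult_left_mono[OF weighted_Cauchy_Schwarz assms(1)] by (simp add: mult.assoc)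
  also have "\<dots> \<le> (\<Sum>c\<in>I. \<bar>u c\<bar> * (X c)\<^sup>2)"
    using mult_right_mono[OF assms(2), of "\<Sum>c\<in>I. \<bar>u c\<bar> * (X c)\<^sup>2"] by (simp add: sum_nonneg)
  finally show ?thesis .
qed

lemma sum_le_sum_inverse_weights:
  fixes q r w :: "'i \<Rightarrow> real"
  assumes "finite I" and "\<And>i. i \<in> I \<Longrightarrow> 0 < w i" "\<And>i. i \<in> I \<Longrightarrow> 0 \<le> r i"
    and "\<And>i. i \<in> I \<Longrightarrow> w i * q i \<le> r i"
  shows "(\<Sum>i\<in>I. q i) \<le> (\<Sum>i\<in>I. 1 / w i) * (\<Sum>i\<in>I. r i)"
proof -
  have "q i \<le> (\<Sum>i\<in>I. 1 / w i) * r i" if i: "i \<in> I" for i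
  proof -
    have "q i \<le> 1 / w i * r i" using assms(2,4)[OF i] by (simp add: field_simps)
    also have "\<dots> \<le> (\<Sum>i\<in>I. 1 / w i) * r i"
      using assms i by (intro mult_right_mono member_le_sum) (auto intro: less_imp_le)
    finally show ?thesis .
  qed
  then have "(\<Sum>i\<in>I. q i) \<le> (\<Sum>i\<in>I. (\<Sum>i\<in>I. 1 / w i) * r i)" by (rule sum_mono)
  then show ?thesis by (simp add: sum_distrib_left)
qed

section \<open>Matrices and vectors\<close>

lemma smult_mat_mult_vec:
  fixes A :: "'a::comm_semiring_0 mat"
  assumes "dim_vec v = dim_col A"
  shows "(k \<cdot>\<^sub>m A) *\<^sub>v v = k \<cdot>\<^sub>v (A *\<^sub>v v)"
  using assms by (intro eq_vecI) (auto simp: scalar_prod_def sum_distrib_left ac_simps)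

lemma mult_mat_vec_uminus:
  fixes A :: "'a::ring mat"
  assumes "dim_vec v = dim_col A"
  shows "A *\<^sub>v (- v) = - (A *\<^sub>v v)"
  using assms by (intro eq_vecI) auto

lemma zero_mat_mult_vec:
  fixes v :: "'a::semiring_0 vec"
  assumes "dim_vec v = nc"
  shows "0\<^sub>m nr nc *\<^sub>v v = 0\<^sub>v nr"
  using assms by (intro eq_vecI) (auto simp: scalar_prod_def)

lemma mult_mat_vec_index_sum:
  fixes A :: "'a::comm_semiring_0 mat"
  assumes "A \<in> carrier_mat nr nc" "v \<in> carrier_vec nc" "r < nr"
  shows "(A *\<^sub>v v) $ r = (\<Sum>c<nc. A $$ (r, c) * v $ c)"
  using assms by (auto simp: scalar_prod_def lessThan_atLeast0 mult.commute intro!: sum.cong)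

lemma scalar_prod_sum:
  assumes "w \<in> carrier_vec n"
  shows "v \<bullet> w = (\<Sum>c<n. v $ c * w $ c)"
  using assms by (auto simp: scalar_prod_def lessThan_atLeast0)

lemma scalar_prod_self_nonneg: "0 \<le> (v :: real vec) \<bullet> v"
  by (simp add: scalar_prod_def sum_nonneg)

lemma scalar_prod_four_block_mat:
  fixes A B C D :: "'a::comm_ring mat"
  assumes "A \<in> carrier_mat n1 m1" "B \<in> carrier_mat n1 m2"
    and "C \<in> carrier_mat n2 m1" "D \<in> carrier_mat n2 m2"
    and "a \<in> carrier_vec n1" "b \<in> carrier_vec n2" "c \<in> carrier_vec m1" "d \<in> carrier_vec m2"
  shows "(a @\<^sub>v b) \<bullet> (four_block_mat A B C D *\<^sub>v (c @\<^sub>v d))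
    = a \<bullet> (A *\<^sub>v c) + a \<bullet> (B *\<^sub>v d) + b \<bullet> (C *\<^sub>v c) + b \<bullet> (D *\<^sub>v d)"
  using assms
  by (simp add: four_block_mat_mult_vec scalar_prod_append
      scalar_prod_add_distrib[of _ n1] scalar_prod_add_distrib[of _ n2])

lemma diagonal_mat_mult_vec_index:
  fixes D :: "'a::comm_semiring_0 mat"
  assumes D: "D \<in> carrier_mat n n" "diagonal_mat D" and v: "v \<in> carrier_vec n" and j: "j < n"
  shows "(D *\<^sub>v v) $ j = D $$ (j, j) * v $ j"
proof -
  have "(D *\<^sub>v v) $ j = (\<Sum>k\<in>{0..<n}. D $$ (j, k) * v $ k)"
    using D v j by (simp add: scalar_prod_def mult.commute)
  also have "\<dots> = (\<Sum>k\<in>{0..<n}. if k = j then D $$ (j, j) * v $ j else 0)"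
    using D j unfolding diagonal_mat_def by (intro sum.cong) auto
  finally show ?thesis using j by simp
qed

lemma diagonal_mat_quadratic_form:
  fixes D :: "'a::comm_semiring_1 mat"
  assumes "D \<in> carrier_mat n n" "diagonal_mat D" "v \<in> carrier_vec n"
  shows "v \<bullet> (D *\<^sub>v v) = (\<Sum>j<n. D $$ (j, j) * (v $ j)\<^sup>2)"
proof -
  have "v \<bullet> (D *\<^sub>v v) = (\<Sum>j\<in>{0..<n}. v $ j * (D *\<^sub>v v) $ j)"
    using assms by (simp add: scalar_prod_def)
  also have "\<dots> = (\<Sum>j<n. D $$ (j, j) * (v $ j)\<^sup>2)"
  proof (unfold lessThan_atLeast0, intro sum.cong refl)
    fix j assume "j \<in> {0..<n}"
    then have "(D *\<^sub>v v) $ j = D $$ (j, j) * v $ j"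
      using diagonal_mat_mult_vec_index[OF assms] by simp
    then show "v $ j * (D *\<^sub>v v) $ j = D $$ (j, j) * (v $ j)\<^sup>2"
      by (simp only: power2_eq_square ac_simps)
  qed
  finally show ?thesis .
qed

lemma row_norm1_scaled_square_le:
  fixes A :: "real mat"
  assumes A: "A \<in> carrier_mat nr nc" and X: "X \<in> carrier_vec nc" and r: "r < nr"
    and s: "0 \<le> s" "row_norm1 A r > 0 \<longrightarrow> s \<le> 1 / row_norm1 A r"
  shows "s * ((A *\<^sub>v X) $ r)\<^sup>2 \<le> (\<Sum>c<nc. \<bar>A $$ (r, c)\<bar> * (X $ c)\<^sup>2)"
proof -
  have R: "row_norm1 A r = (\<Sum>c<nc. \<bar>A $$ (r, c)\<bar>)" unfolding row_norm1_def using A by simp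
  have "s * row_norm1 A r \<le> 1"
  proof (cases "row_norm1 A r > 0")
    case False
    moreover have "0 \<le> row_norm1 A r" unfolding R by (intro sum_nonneg) simp
    ultimately show ?thesis by simp
  qed (use s in \<open>simp add: field_simps\<close>)
  then show ?thesis
    unfolding mult_mat_vec_index_sum[OF A X r] using s(1) R
    by (intro weighted_square_le_row_norm) auto
qed

lemma sum_abs_entries_eq_row_norm1_transpose:
  fixes A :: "real mat"
  assumes "A \<in> carrier_mat nr nc"
  shows "(\<Sum>r<nr. \<Sum>c<nc. \<bar>A $$ (r, c)\<bar> * (X $ c)\<^sup>2)
    = (\<Sum>c<nc. row_norm1 (transpose_mat A) c * (X $ c)\<^sup>2)"
  using assms by (subst sum.swap) (auto simp: row_norm1_def sum_distrib_right intro!: sum.cong)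

lemma psd_matD:
  assumes "psd_mat P" "x \<in> carrier_vec (dim_row P)"
  shows "0 \<le> x \<bullet> (P *\<^sub>v x)"
  using assms unfolding psd_mat_def by blast

lemma psd_mat_shift_le:
  assumes E: "E \<in> carrier_mat n n" and psd: "psd_mat (E - e \<cdot>\<^sub>m 1\<^sub>m n)" and x: "x \<in> carrier_vec n"
  shows "e * (x \<bullet> x) \<le> x \<bullet> (E *\<^sub>v x)"
proof -
  have "0 \<le> x \<bullet> ((E - e \<cdot>\<^sub>m 1\<^sub>m n) *\<^sub>v x)" using psd_matD[OF psd] E x by simp
  also have "\<dots> = x \<bullet> (E *\<^sub>v x) - e * (x \<bullet> x)"
    using E x by (simp add: minus_mult_distrib_mat_vec smult_mat_mult_vec scalar_prod_minus_distrib)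
  finally show ?thesis by simp
qed

lemma det_nonzero_if_psd_shift:
  assumes E: "E \<in> carrier_mat n n" and psd: "psd_mat (E - e \<cdot>\<^sub>m 1\<^sub>m n)" and e: "e > 0"
  shows "det E \<noteq> 0"
proof
  assume "det E = 0"
  then obtain v where v: "v \<in> carrier_vec n" "v \<noteq> 0\<^sub>v n" "E *\<^sub>v v = 0\<^sub>v n"
    using det_0_iff_vec_prod_zero[OF E] by auto
  have "e * (v \<bullet> v) \<le> 0" using psd_mat_shift_le[OF E psd v(1)] v by simp
  then have "(\<Sum>k\<in>{0..<n}. v $ k * v $ k) = 0"
    using e v(1) scalar_prod_self_nonneg[of v]
    by (simp add: scalar_prod_def mult_le_0_iff)
  then have "\<forall>k<n. v $ k = 0" by (subst (asm) sum_nonneg_eq_0_iff) auto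
  then have "v = 0\<^sub>v n" using v(1) by (intro eq_vecI) auto
  with v(2) show False ..
qed

lemma mat_inv_right_inverse_if_psd_shift:
  assumes E: "E \<in> carrier_mat n n" and "psd_mat (E - e \<cdot>\<^sub>m 1\<^sub>m n)" and "e > 0"
  shows "mat_inv E \<in> carrier_mat n n" "E * mat_inv E = 1\<^sub>m n"
proof -
  obtain B where "B \<in> carrier_mat n n" "E * B = 1\<^sub>m n" "B * E = 1\<^sub>m n"
    using det_non_zero_imp_unit[OF E det_nonzero_if_psd_shift[OF assms], of "()"]
    unfolding Units_def ring_mat_def by auto
  moreover have "mat_inv E = (SOME B. B \<in> carrier_mat n n \<and> E * B = 1\<^sub>m n \<and> B * E = 1\<^sub>m n)"
    unfolding mat_inv_def using E by simp
  ultimately have "mat_inv E \<in> carrier_mat n n \<and> E * mat_inv E = 1\<^sub>m n \<and> mat_inv E * E = 1\<^sub>m n"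
    using someI[of "\<lambda>B. B \<in> carrier_mat n n \<and> E * B = 1\<^sub>m n \<and> B * E = 1\<^sub>m n" B] by simp
  then show "mat_inv E \<in> carrier_mat n n" "E * mat_inv E = 1\<^sub>m n" by auto
qed

lemma quadratic_form_right_inverse_bounds:
  assumes E: "E \<in> carrier_mat n n" and P: "P \<in> carrier_mat n n" and EP: "E * P = 1\<^sub>m n"
    and psd: "psd_mat (E - e \<cdot>\<^sub>m 1\<^sub>m n)" and e: "e > 0" and z: "z \<in> carrier_vec n"
  shows "0 \<le> z \<bullet> (P *\<^sub>v z)" "e * (z \<bullet> (P *\<^sub>v z)) \<le> z \<bullet> z"
proof -
  define w where "w = P *\<^sub>v z"
  have w: "w \<in> carrier_vec n" unfolding w_def using P z by simp
  have "E *\<^sub>v w = z" unfolding w_def using E P z EP by (simp flip: assoc_mult_mat_vec)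
  then have zw: "z \<bullet> w = w \<bullet> (E *\<^sub>v w)"
    using comm_scalar_prod[of "E *\<^sub>v w" n w] E w z by simp
  have lower: "e * (w \<bullet> w) \<le> z \<bullet> w" unfolding zw by (rule psd_mat_shift_le[OF E psd w])
  then show "0 \<le> z \<bullet> (P *\<^sub>v z)"
    unfolding w_def[symmetric] using mult_nonneg_nonneg[of e "w \<bullet> w"] e
      scalar_prod_self_nonneg[of w]
    by linarith
  have "0 \<le> (\<Sum>k\<in>{0..<n}. (z $ k - e * w $ k)\<^sup>2)" by (simp add: sum_nonneg)
  also have "\<dots> = (\<Sum>k\<in>{0..<n}. z $ k * z $ k - 2 * e * (z $ k * w $ k) + e * (e * (w $ k * w $ k)))"
    by (intro sum.cong refl) (simp add: power2_eq_square algebra_simps)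
  also have "\<dots> = z \<bullet> z - 2 * e * (z \<bullet> w) + e * (e * (w \<bullet> w))"
    using z w unfolding scalar_prod_def by (simp add: sum.distrib sum_subtractf sum_distrib_left)
  finally have "2 * e * (z \<bullet> w) \<le> z \<bullet> z + e * (e * (w \<bullet> w))" by linarith
  moreover have "e * (e * (w \<bullet> w)) \<le> e * (z \<bullet> w)" using mult_left_mono[OF lower, of e] e by linarith
  ultimately show "e * (z \<bullet> (P *\<^sub>v z)) \<le> z \<bullet> z" unfolding w_def[symmetric] by linarith
qed

section \<open>Local dissipation from the LMI\<close>

text \<open>The matrix of condition (iii), with \<open>Z\<close> standing for \<open>A\<^sub>i E\<^sub>i + B\<^sub>i G\<^sub>i\<close>.\<close>

definition lmi_mat ::
  "nat \<Rightarrow> nat \<Rightarrow> real mat \<Rightarrow> real mat \<Rightarrow> real mat \<Rightarrow> real mat \<Rightarrow> real mat \<Rightarrow> real mat \<Rightarrow> real mat"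
  where "lmi_mat n m E C S Z F H =
     four_block_mat
       (four_block_mat E ((1/2) \<cdot>\<^sub>m (E * transpose_mat C))
          ((1/2) \<cdot>\<^sub>m (C * E)) ((1/2) \<cdot>\<^sub>m S + (1/2) \<cdot>\<^sub>m transpose_mat S))
       (four_block_mat (transpose_mat Z) E (transpose_mat F) (0\<^sub>m m n))
       (four_block_mat Z F E (0\<^sub>m n m))
       (four_block_mat E (0\<^sub>m n n) (0\<^sub>m n n) H)"

lemma lmi_mat_quadratic_form:
  assumes E: "E \<in> carrier_mat n n" "transpose_mat E = E" and C: "C \<in> carrier_mat m n"
    and S: "S \<in> carrier_mat m m" and Z: "Z \<in> carrier_mat n n" and F: "F \<in> carrier_mat n m"
    and H: "H \<in> carrier_mat n n"
    and a: "a \<in> carrier_vec n" and v: "v \<in> carrier_vec m"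
    and c: "c \<in> carrier_vec n" and d: "d \<in> carrier_vec n"
  shows "((a @\<^sub>v v) @\<^sub>v (c @\<^sub>v d)) \<bullet> (lmi_mat n m E C S Z F H *\<^sub>v ((a @\<^sub>v v) @\<^sub>v (c @\<^sub>v d)))
    = a \<bullet> (E *\<^sub>v a) + v \<bullet> (C *\<^sub>v (E *\<^sub>v a)) + v \<bullet> (S *\<^sub>v v)
      + 2 * (c \<bullet> (Z *\<^sub>v a + F *\<^sub>v v)) + c \<bullet> (E *\<^sub>v c) + 2 * (d \<bullet> (E *\<^sub>v a)) + d \<bullet> (H *\<^sub>v d)"
proof -
  have sym: "x \<bullet> (transpose_mat A *\<^sub>v y) = y \<bullet> (A *\<^sub>v x)"
    if "A \<in> carrier_mat k k'" "x \<in> carrier_vec k'" "y \<in> carrier_vec k"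
    for A :: "real mat" and x y k k'
    using transpose_vec_mult_scalar[OF that] that
      comm_scalar_prod[OF that(2), of "transpose_mat A *\<^sub>v y"]
    by simp
  have "a \<bullet> (((1/2) \<cdot>\<^sub>m (E * transpose_mat C)) *\<^sub>v v) = 1/2 * (v \<bullet> (C *\<^sub>v (E *\<^sub>v a)))"
    using sym[OF E(1) a, of "transpose_mat C *\<^sub>v v"] E C a v
      transpose_vec_mult_scalar[OF C _ v, of "E *\<^sub>v a"]
    by (simp add: smult_mat_mult_vec)
  moreover have "v \<bullet> (((1/2) \<cdot>\<^sub>m S + (1/2) \<cdot>\<^sub>m transpose_mat S) *\<^sub>v v) = v \<bullet> (S *\<^sub>v v)"
    using sym[OF S v v] S v
    by (simp add: add_mult_distrib_mat_vec[of _ m m] smult_mat_mult_vec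
        scalar_prod_add_distrib[of _ m])
  moreover have "a \<bullet> (transpose_mat Z *\<^sub>v c) = c \<bullet> (Z *\<^sub>v a)" by (rule sym[OF Z a c])
  moreover have "v \<bullet> (transpose_mat F *\<^sub>v c) = c \<bullet> (F *\<^sub>v v)" by (rule sym[OF F v c])
  moreover have "a \<bullet> (E *\<^sub>v d) = d \<bullet> (E *\<^sub>v a)" using sym[OF E(1) a d] E(2) by simp
  ultimately show ?thesis
    unfolding lmi_mat_def using E C S Z F H a v c d
    by (simp add: scalar_prod_four_block_mat[of _ "n + m" "n + m" _ "n + n" _ "n + n"]
        scalar_prod_four_block_mat[of _ n n _ m _ m] scalar_prod_four_block_mat[of _ n n _ n _ m]
        scalar_prod_four_block_mat[of _ n n _ m _ n] scalar_prod_four_block_mat[of _ n n _ n _ n]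
        smult_mat_mult_vec zero_mat_mult_vec scalar_prod_add_distrib[of _ n])
qed

lemma closed_loop_dissipation:
  fixes A B F C G S H E P :: "real mat" and x v :: "real vec"
  assumes A: "A \<in> carrier_mat n n" and B: "B \<in> carrier_mat n m" and F: "F \<in> carrier_mat n m"
    and C: "C \<in> carrier_mat m n" and G: "G \<in> carrier_mat m n" and S: "S \<in> carrier_mat m m"
    and H: "H \<in> carrier_mat n n" "diagonal_mat H" "\<forall>j<n. H $$ (j, j) \<noteq> 0"
    and E: "E \<in> carrier_mat n n" "transpose_mat E = E"
    and P: "P \<in> carrier_mat n n" "E * P = 1\<^sub>m n"
    and lmi: "psd_mat (lmi_mat n m E C S (A * E + B * G) F H)"
    and x: "x \<in> carrier_vec n" and v: "v \<in> carrier_vec m"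
  defines "x' \<equiv> (A + B * (G * P)) *\<^sub>v x + F *\<^sub>v v"
  shows "x' \<bullet> (P *\<^sub>v x') \<le> x \<bullet> (P *\<^sub>v x) + (C *\<^sub>v x) \<bullet> v + v \<bullet> (S *\<^sub>v v)
           - (\<Sum>j<n. (x $ j)\<^sup>2 / H $$ (j, j))"
proof -
  define h where "h = vec n (\<lambda>j. x $ j / H $$ (j, j))"
  have x': "x' \<in> carrier_vec n" unfolding x'_def using A B G P(1) F x v
    by (meson add_carrier_mat add_carrier_vec mult_carrier_mat mult_mat_vec_carrier)
  have h: "h \<in> carrier_vec n" unfolding h_def by simp
  have EP: "E *\<^sub>v (P *\<^sub>v y) = y" if "y \<in> carrier_vec n" for y
    using E P that by (simp flip: assoc_mult_mat_vec)
  have Z: "(A * E + B * G) *\<^sub>v (P *\<^sub>v x) = (A + B * (G * P)) *\<^sub>v x"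
  proof -
    have "(A * E + B * G) *\<^sub>v (P *\<^sub>v x) = ((A * E + B * G) * P) *\<^sub>v x"
      using A B G E P x by (subst assoc_mult_mat_vec) auto
    also have "(A * E + B * G) * P = A + B * (G * P)"
      using A B G E P by (simp add: add_mult_distrib_mat[of _ n n] assoc_mult_mat[of _ n n _ n _ n])
    finally show ?thesis .
  qed
  have Hh: "H *\<^sub>v h = x"
    using H x h
    by (intro eq_vecI) (auto simp: h_def diagonal_mat_mult_vec_index simp del: index_mult_mat_vec)
  have hx: "h \<bullet> x = (\<Sum>j<n. (x $ j)\<^sup>2 / H $$ (j, j))"
    using x by (simp add: h_def scalar_prod_def lessThan_atLeast0 power2_eq_square)
  define w where "w = ((P *\<^sub>v x) @\<^sub>v v) @\<^sub>v (- (P *\<^sub>v x') @\<^sub>v - h)"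
  have "dim_row (lmi_mat n m E C S (A * E + B * G) F H) = n + m + (n + n)"
    using E S H by (simp add: lmi_mat_def)
  then have "0 \<le> w \<bullet> (lmi_mat n m E C S (A * E + B * G) F H *\<^sub>v w)"
    using psd_matD[OF lmi] P x x' v h unfolding w_def by simp
  also have "\<dots> = (P *\<^sub>v x) \<bullet> (E *\<^sub>v (P *\<^sub>v x)) + v \<bullet> (C *\<^sub>v (E *\<^sub>v (P *\<^sub>v x))) + v \<bullet> (S *\<^sub>v v)
      + 2 * (- (P *\<^sub>v x') \<bullet> ((A * E + B * G) *\<^sub>v (P *\<^sub>v x) + F *\<^sub>v v))
      + - (P *\<^sub>v x') \<bullet> (E *\<^sub>v - (P *\<^sub>v x')) + 2 * (- h \<bullet> (E *\<^sub>v (P *\<^sub>v x))) + - h \<bullet> (H *\<^sub>v - h)"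
    unfolding w_def using A B G P(1) x x' v h
    by (intro lmi_mat_quadratic_form[OF E C S _ F H(1)]) auto
  also have "\<dots> = x \<bullet> (P *\<^sub>v x) + (C *\<^sub>v x) \<bullet> v + v \<bullet> (S *\<^sub>v v) - x' \<bullet> (P *\<^sub>v x') - h \<bullet> x"
    using P(1) x x' v h C E(1) H(1)
      comm_scalar_prod[of "P *\<^sub>v x" n x] comm_scalar_prod[of v m "C *\<^sub>v x"]
      comm_scalar_prod[of "P *\<^sub>v x'" n x'] comm_scalar_prod[of h n x]
    by (simp add: EP Z Hh mult_mat_vec_uminus flip: x'_def)
  finally show ?thesis unfolding hx by linarith
qed

section \<open>Block indexing of the global system\<close>

lemma sum_lessThan_add: "(\<Sum>c<a + (b::nat). f c) = (\<Sum>c<a. f c) + (\<Sum>j<b. f (a + j))"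
  by (induction b) (auto simp: add_ac)

lemma offs_Suc: "offs nn (Suc i) = offs nn i + nn i"
  unfolding offs_def by simp

lemma offs_add_le:
  assumes "i < i'"
  shows "offs nn i + nn i \<le> offs nn i'"
proof -
  have "offs nn (Suc i) \<le> offs nn i'" unfolding offs_def using assms by (intro sum_mono2) auto
  then show ?thesis by (simp add: offs_Suc)
qed

lemma offs_block_iff:
  fixes nn :: "nat \<Rightarrow> nat"
  assumes "j < nn i'"
  shows "offs nn i \<le> offs nn i' + j \<and> offs nn i' + j < offs nn i + nn i \<longleftrightarrow> i = i'"
  using offs_add_le[of i i' nn] offs_add_le[of i' i nn] assms
  by (cases i i' rule: linorder_cases) auto

lemma sum_lessThan_offs: "(\<Sum>c<offs nn M. f c) = (\<Sum>i<M. \<Sum>j<nn i. f (offs nn i + j))"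
  by (induction M) (auto simp: offs_Suc sum_lessThan_add, simp add: offs_def)

lemma sum_lessThan_mult: "(\<Sum>r<M * (m0::nat). f r) = (\<Sum>i<M. \<Sum>k<m0. f (i * m0 + k))"
  using sum_lessThan_offs[where nn = "\<lambda>_. m0" and M = M and f = f] by (simp add: offs_def)

lemma block_index_less:
  assumes "i < M" "k < m0"
  shows "i * m0 + k < M * (m0::nat)"
proof -
  have "i * m0 + k < Suc i * m0" using assms(2) by simp
  also have "\<dots> \<le> M * m0" using assms(1) by (intro mult_right_mono) auto
  finally show ?thesis .
qed

lemma Cglob_carrier: "Cglob M m0 nn C \<in> carrier_mat (M * m0) (offs nn M)"
  unfolding Cglob_def by simp

lemma Ltil_carrier: "Ltil M m0 N l \<in> carrier_mat (M * m0) (M * m0)"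
  unfolding Ltil_def by simp

definition stack_vec :: "nat \<Rightarrow> (nat \<Rightarrow> nat) \<Rightarrow> (nat \<Rightarrow> real vec) \<Rightarrow> real vec" where
  "stack_vec M nn x = vec (offs nn M) (\<lambda>c. \<Sum>i<M.
      if offs nn i \<le> c \<and> c < offs nn i + nn i then x i $ (c - offs nn i) else 0)"

lemma stack_vec_carrier: "stack_vec M nn x \<in> carrier_vec (offs nn M)"
  unfolding stack_vec_def by simp

lemma stack_vec_index:
  assumes "i < M" "j < nn i"
  shows "stack_vec M nn x $ (offs nn i + j) = x i $ j"
proof -
  have "offs nn i + j < offs nn M" using offs_add_le[OF assms(1), of nn] assms(2) by simp
  then have "stack_vec M nn x $ (offs nn i + j) = (\<Sum>i'<M. if i' = i then x i $ j else 0)"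
    unfolding stack_vec_def using offs_block_iff[where nn = nn and i' = i, OF assms(2)]
    by (auto intro!: sum.cong)
  then show ?thesis using assms(1) by simp
qed

lemma Cglob_index:
  assumes "i < M" "k < m0" "i' < M" "j < nn i'"
  shows "Cglob M m0 nn C $$ (i * m0 + k, offs nn i' + j) = (if i' = i then C i $$ (k, j) else 0)"
proof -
  have "i * m0 + k < M * m0" "offs nn i' + j < offs nn M"
    using block_index_less[OF assms(1,2)] offs_add_le[OF assms(3), of nn] assms(4) by auto
  then show ?thesis
    unfolding Cglob_def using assms offs_block_iff[where nn = nn and i = i and i' = i', OF assms(4)]
    by (auto simp: Let_def)
qed

lemma Cglob_mult_stack_vec:
  assumes C: "\<forall>i<M. C i \<in> carrier_mat m0 (nn i)" and x: "\<forall>i<M. x i \<in> carrier_vec (nn i)"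
    and i: "i < M" and k: "k < m0"
  shows "(Cglob M m0 nn C *\<^sub>v stack_vec M nn x) $ (i * m0 + k) = (C i *\<^sub>v x i) $ k"
proof -
  have "(Cglob M m0 nn C *\<^sub>v stack_vec M nn x) $ (i * m0 + k)
      = (\<Sum>i'<M. \<Sum>j<nn i'.
           Cglob M m0 nn C $$ (i * m0 + k, offs nn i' + j) * stack_vec M nn x $ (offs nn i' + j))"
    by (simp add: sum_lessThan_offs
        mult_mat_vec_index_sum[OF Cglob_carrier stack_vec_carrier block_index_less[OF i k]])
  also have "\<dots> = (\<Sum>i'<M. if i' = i then (\<Sum>j<nn i. C i $$ (k, j) * x i $ j) else 0)"
  proof (intro sum.cong refl)
    fix i' assume i': "i' \<in> {..<M}"
    show "(\<Sum>j<nn i'.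
            Cglob M m0 nn C $$ (i * m0 + k, offs nn i' + j) * stack_vec M nn x $ (offs nn i' + j))
      = (if i' = i then (\<Sum>j<nn i. C i $$ (k, j) * x i $ j) else 0)"
      using i k i' by (cases "i' = i")
        (auto simp: Cglob_index stack_vec_index intro!: sum.cong sum.neutral)
  qed
  also have "\<dots> = (C i *\<^sub>v x i) $ k"
    using i mult_mat_vec_index_sum[OF C[rule_format, OF i] x[rule_format, OF i] k] by simp
  finally show ?thesis .
qed

lemma Ltil_index:
  assumes "i < M" "k < m0" "j < M" "k' < m0"
  shows "Ltil M m0 N l $$ (i * m0 + k, j * m0 + k') =
    (if k' = k then (if j = i then (\<Sum>j'\<in>N i. l i j') else if j \<in> N i then - l i j else 0) else 0)"
  using block_index_less[OF assms(1,2)] block_index_less[OF assms(3,4)] assms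
  by (auto simp: Ltil_def Let_def)

lemma Ltil_mult_vec:
  assumes N: "\<forall>i<M. N i \<subseteq> {0..<M} - {i}" and Y: "Y \<in> carrier_vec (M * m0)"
    and y: "\<And>j k. j < M \<Longrightarrow> k < m0 \<Longrightarrow> Y $ (j * m0 + k) = y j $ k"
    and i: "i < M" and k: "k < m0"
  shows "(Ltil M m0 N l *\<^sub>v Y) $ (i * m0 + k) = - (\<Sum>j\<in>N i. l i j * (y j $ k - y i $ k))"
proof -
  have "N i \<subseteq> {0..<M} - {i}" using N i by blast
  then have Ni: "N i \<subseteq> {..<M}" "i \<notin> N i" by auto
  have "(Ltil M m0 N l *\<^sub>v Y) $ (i * m0 + k)
      = (\<Sum>j<M. \<Sum>k'<m0. Ltil M m0 N l $$ (i * m0 + k, j * m0 + k') * Y $ (j * m0 + k'))"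
    by (simp add: sum_lessThan_mult
        mult_mat_vec_index_sum[OF Ltil_carrier Y block_index_less[OF i k]])
  also have "\<dots> = (\<Sum>j<M. (if j = i then (\<Sum>j'\<in>N i. l i j') * y i $ k else 0)
                        + (if j \<in> N i then - (l i j * y j $ k) else 0))"
  proof (intro sum.cong refl)
    fix j assume j: "j \<in> {..<M}"
    let ?c = "if j = i then (\<Sum>j'\<in>N i. l i j') else if j \<in> N i then - l i j else 0"
    have "(\<Sum>k'<m0. Ltil M m0 N l $$ (i * m0 + k, j * m0 + k') * Y $ (j * m0 + k'))
        = (\<Sum>k'<m0. if k' = k then ?c * y j $ k else 0)"
      using i k j by (intro sum.cong refl) (auto simp: Ltil_index y)
    also have "\<dots> = ?c * y j $ k" using k by simp
    finally show "(\<Sum>k'<m0. Ltil M m0 N l $$ (i * m0 + k, j * m0 + k') * Y $ (j * m0 + k'))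
        = (if j = i then (\<Sum>j'\<in>N i. l i j') * y i $ k else 0)
          + (if j \<in> N i then - (l i j * y j $ k) else 0)"
      using Ni by auto
  qed
  also have "\<dots> = (\<Sum>j'\<in>N i. l i j') * y i $ k - (\<Sum>j\<in>N i. l i j * y j $ k)"
    using i Ni by (simp add: sum.distrib Int_absorb1 sum_negf flip: sum.inter_restrict)
  also have "\<dots> = - (\<Sum>j\<in>N i. l i j * (y j $ k - y i $ k))"
    by (simp add: right_diff_distrib sum_subtractf sum_distrib_right)
  finally show ?thesis .
qed

definition coupling_input ::
  "(nat \<Rightarrow> real mat) \<Rightarrow> (nat \<Rightarrow> nat set) \<Rightarrow> (nat \<Rightarrow> nat \<Rightarrow> real) \<Rightarrow> (nat \<Rightarrow> real vec) \<Rightarrow> nat \<Rightarrow> real vec"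
  where "coupling_input C N l x i =
    vec (dim_row (C i)) (\<lambda>k. \<Sum>j\<in>N i. l i j * ((C j *\<^sub>v x j) $ k - (C i *\<^sub>v x i) $ k))"

lemma coupling_input_carrier: "C i \<in> carrier_mat m n \<Longrightarrow> coupling_input C N l x i \<in> carrier_vec m"
  unfolding coupling_input_def by simp

lemma coupling_input_index:
  "k < dim_row (C i) \<Longrightarrow>
    coupling_input C N l x i $ k = (\<Sum>j\<in>N i. l i j * ((C j *\<^sub>v x j) $ k - (C i *\<^sub>v x i) $ k))"
  unfolding coupling_input_def by simp

lemma coupling_input_eq_Ltil_Cglob:
  assumes C: "\<forall>i<M. C i \<in> carrier_mat m0 (nn i)" and N: "\<forall>i<M. N i \<subseteq> {0..<M} - {i}"
    and x: "\<forall>i<M. x i \<in> carrier_vec (nn i)" and i: "i < M" and k: "k < m0"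
  shows "coupling_input C N l x i $ k
    = - ((Ltil M m0 N l * Cglob M m0 nn C) *\<^sub>v stack_vec M nn x) $ (i * m0 + k)"
proof -
  have "(Ltil M m0 N l * Cglob M m0 nn C) *\<^sub>v stack_vec M nn x
      = Ltil M m0 N l *\<^sub>v (Cglob M m0 nn C *\<^sub>v stack_vec M nn x)"
    using Ltil_carrier Cglob_carrier stack_vec_carrier by (rule assoc_mult_mat_vec)
  moreover have "(Ltil M m0 N l *\<^sub>v (Cglob M m0 nn C *\<^sub>v stack_vec M nn x)) $ (i * m0 + k)
      = - (\<Sum>j\<in>N i. l i j * ((C j *\<^sub>v x j) $ k - (C i *\<^sub>v x i) $ k))"
    using mult_mat_vec_carrier[OF Cglob_carrier stack_vec_carrier] Cglob_mult_stack_vec[OF C x]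
    by (intro Ltil_mult_vec[OF N _ _ i k]) auto
  ultimately show ?thesis using C[rule_format, OF i] k unfolding coupling_input_def by simp
qed

section \<open>Dissipation of the interconnection\<close>

lemma coupling_cross_term_nonpos:
  assumes C: "\<forall>i<M. C i \<in> carrier_mat m0 (nn i)" and N: "\<forall>i<M. N i \<subseteq> {0..<M} - {i}"
    and L: "\<forall>w \<in> carrier_vec (M * m0). 0 \<le> w \<bullet> (Ltil M m0 N l *\<^sub>v w)"
    and x: "\<forall>i<M. x i \<in> carrier_vec (nn i)"
  shows "(\<Sum>i<M. (C i *\<^sub>v x i) \<bullet> coupling_input C N l x i) \<le> 0"
proof -
  define Y where "Y = Cglob M m0 nn C *\<^sub>v stack_vec M nn x"
  have Y: "Y \<in> carrier_vec (M * m0)"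
    unfolding Y_def by (rule mult_mat_vec_carrier[OF Cglob_carrier stack_vec_carrier])
  have LY: "Ltil M m0 N l *\<^sub>v Y \<in> carrier_vec (M * m0)"
    by (rule mult_mat_vec_carrier[OF Ltil_carrier Y])
  have Yi: "Y $ (i * m0 + k) = (C i *\<^sub>v x i) $ k" if "i < M" "k < m0" for i k
    unfolding Y_def using Cglob_mult_stack_vec[OF C x that] .
  have vi: "coupling_input C N l x i $ k = - (Ltil M m0 N l *\<^sub>v Y) $ (i * m0 + k)"
    if "i < M" "k < m0" for i k
    using Ltil_mult_vec[OF N Y Yi that] C[rule_format, OF that(1)] that(2)
    by (simp add: coupling_input_index)
  have "(\<Sum>i<M. (C i *\<^sub>v x i) \<bullet> coupling_input C N l x i)
      = (\<Sum>i<M. \<Sum>k<m0. Y $ (i * m0 + k) * - (Ltil M m0 N l *\<^sub>v Y) $ (i * m0 + k))"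
  proof (intro sum.cong refl)
    fix i assume i: "i \<in> {..<M}"
    have "coupling_input C N l x i \<in> carrier_vec m0" using coupling_input_carrier C i by blast
    then show "(C i *\<^sub>v x i) \<bullet> coupling_input C N l x i
        = (\<Sum>k<m0. Y $ (i * m0 + k) * - (Ltil M m0 N l *\<^sub>v Y) $ (i * m0 + k))"
      using i by (simp add: scalar_prod_sum Yi vi)
  qed
  also have "\<dots> = - (Y \<bullet> (Ltil M m0 N l *\<^sub>v Y))"
    using sum_lessThan_mult[of "\<lambda>r. Y $ r * (Ltil M m0 N l *\<^sub>v Y) $ r" M m0]
    by (simp add: scalar_prod_sum[OF LY] sum_negf)
  finally show ?thesis using L Y by auto
qed

lemma coupling_gain_bound:
  assumes C: "\<forall>i<M. C i \<in> carrier_mat m0 (nn i)" and N: "\<forall>i<M. N i \<subseteq> {0..<M} - {i}"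
    and x: "\<forall>i<M. x i \<in> carrier_vec (nn i)"
    and S: "\<forall>i<M. S i \<in> carrier_mat m0 m0" "\<forall>i<M. diagonal_mat (S i) \<and> (\<forall>k<m0. S i $$ (k, k) > 0)"
    and gain: "\<forall>i<M. \<forall>k<m0.
       row_norm1 (Ltil M m0 N l * Cglob M m0 nn C) (i * m0 + k) > 0 \<longrightarrow>
       S i $$ (k, k) \<le> 1 / row_norm1 (Ltil M m0 N l * Cglob M m0 nn C) (i * m0 + k)"
  shows "(\<Sum>i<M. coupling_input C N l x i \<bullet> (S i *\<^sub>v coupling_input C N l x i))
    \<le> (\<Sum>i<M. \<Sum>j<nn i. row_norm1 (transpose_mat (Cglob M m0 nn C) * transpose_mat (Ltil M m0 N l))
                                   (offs nn i + j) * (x i $ j)\<^sup>2)"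
proof -
  define U where "U = Ltil M m0 N l * Cglob M m0 nn C"
  define X where "X = stack_vec M nn x"
  have U: "U \<in> carrier_mat (M * m0) (offs nn M)"
    unfolding U_def using Ltil_carrier Cglob_carrier by (rule mult_carrier_mat)
  have v: "coupling_input C N l x i \<in> carrier_vec m0" if "i < M" for i
    using coupling_input_carrier C that by blast
  have row: "S i $$ (k, k) * (coupling_input C N l x i $ k)\<^sup>2
      \<le> (\<Sum>c<offs nn M. \<bar>U $$ (i * m0 + k, c)\<bar> * (X $ c)\<^sup>2)"
    if i: "i < M" and k: "k < m0" for i k
  proof -
    have "coupling_input C N l x i $ k = - (U *\<^sub>v X) $ (i * m0 + k)"
      using coupling_input_eq_Ltil_Cglob[OF C N x i k] unfolding U_def X_def .
    moreover have "S i $$ (k, k) * ((U *\<^sub>v X) $ (i * m0 + k))\<^sup>2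
        \<le> (\<Sum>c<offs nn M. \<bar>U $$ (i * m0 + k, c)\<bar> * (X $ c)\<^sup>2)"
      using S(2) gain i k unfolding U_def[symmetric]
      by (intro row_norm1_scaled_square_le[OF U _ block_index_less[OF i k]])
        (auto simp: X_def stack_vec_carrier less_imp_le)
    ultimately show ?thesis by simp
  qed
  have "(\<Sum>i<M. coupling_input C N l x i \<bullet> (S i *\<^sub>v coupling_input C N l x i))
      = (\<Sum>i<M. \<Sum>k<m0. S i $$ (k, k) * (coupling_input C N l x i $ k)\<^sup>2)"
  proof (intro sum.cong refl)
    fix i assume "i \<in> {..<M}"
    then show "coupling_input C N l x i \<bullet> (S i *\<^sub>v coupling_input C N l x i)
        = (\<Sum>k<m0. S i $$ (k, k) * (coupling_input C N l x i $ k)\<^sup>2)"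
      using S v by (intro diagonal_mat_quadratic_form) auto
  qed
  also have "\<dots> \<le> (\<Sum>i<M. \<Sum>k<m0. \<Sum>c<offs nn M. \<bar>U $$ (i * m0 + k, c)\<bar> * (X $ c)\<^sup>2)"
    using row by (intro sum_mono) simp
  also have "\<dots> = (\<Sum>c<offs nn M. row_norm1 (transpose_mat U) c * (X $ c)\<^sup>2)"
    using sum_abs_entries_eq_row_norm1_transpose[OF U, of X] by (simp add: sum_lessThan_mult)
  also have "\<dots> = (\<Sum>i<M. \<Sum>j<nn i. row_norm1 (transpose_mat U) (offs nn i + j) * (x i $ j)\<^sup>2)"
    unfolding X_def by (simp add: sum_lessThan_offs stack_vec_index)
  finally show ?thesis
    unfolding U_def using transpose_mult[OF Ltil_carrier Cglob_carrier] by simp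
qed

lemma coupling_dissipation:
  assumes C: "\<forall>i<M. C i \<in> carrier_mat m0 (nn i)" and N: "\<forall>i<M. N i \<subseteq> {0..<M} - {i}"
    and L: "\<forall>w \<in> carrier_vec (M * m0). 0 \<le> w \<bullet> (Ltil M m0 N l *\<^sub>v w)"
    and x: "\<forall>i<M. x i \<in> carrier_vec (nn i)"
    and S: "\<forall>i<M. S i \<in> carrier_mat m0 m0" "\<forall>i<M. diagonal_mat (S i) \<and> (\<forall>k<m0. S i $$ (k, k) > 0)"
    and H: "\<forall>i<M. \<forall>j<nn i. H i $$ (j, j) > 0"
    and gain: "\<forall>i<M. \<forall>k<m0.
       row_norm1 (Ltil M m0 N l * Cglob M m0 nn C) (i * m0 + k) > 0 \<longrightarrow>
       S i $$ (k, k) \<le> 1 / row_norm1 (Ltil M m0 N l * Cglob M m0 nn C) (i * m0 + k)"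
    and margin: "\<forall>i<M. \<forall>j<nn i. H i $$ (j, j) \<le>
       1 / (row_norm1 (transpose_mat (Cglob M m0 nn C) * transpose_mat (Ltil M m0 N l))
                      (offs nn i + j) + eps0)"
  shows "(\<Sum>i<M. (C i *\<^sub>v x i) \<bullet> coupling_input C N l x i
            + coupling_input C N l x i \<bullet> (S i *\<^sub>v coupling_input C N l x i)
            - (\<Sum>j<nn i. (x i $ j)\<^sup>2 / H i $$ (j, j)))
         \<le> - eps0 * (\<Sum>i<M. x i \<bullet> x i)"
proof -
  let ?R = "row_norm1 (transpose_mat (Cglob M m0 nn C) * transpose_mat (Ltil M m0 N l))"
  have entry: "?R (offs nn i + j) * (x i $ j)\<^sup>2 \<le> (x i $ j)\<^sup>2 / H i $$ (j, j) - eps0 * (x i $ j)\<^sup>2"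
    if "i < M" "j < nn i" for i j
  proof -
    have h: "0 < H i $$ (j, j)" "H i $$ (j, j) \<le> 1 / (?R (offs nn i + j) + eps0)"
      using H margin that by auto
    then have "0 < 1 / (?R (offs nn i + j) + eps0)" by linarith
    then have "0 < ?R (offs nn i + j) + eps0" by (simp only: zero_less_divide_1_iff)
    then have "?R (offs nn i + j) + eps0 \<le> 1 / H i $$ (j, j)" using h by (simp add: field_simps)
    then have "(?R (offs nn i + j) + eps0) * (x i $ j)\<^sup>2 \<le> 1 / H i $$ (j, j) * (x i $ j)\<^sup>2"
      by (rule mult_right_mono) simp
    then show ?thesis by (simp add: algebra_simps)
  qed
  have squares: "(\<Sum>i<M. x i \<bullet> x i) = (\<Sum>i<M. \<Sum>j<nn i. (x i $ j)\<^sup>2)"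
    using x by (intro sum.cong refl) (simp add: scalar_prod_sum power2_eq_square)
  have "(\<Sum>i<M. \<Sum>j<nn i. ?R (offs nn i + j) * (x i $ j)\<^sup>2)
      \<le> (\<Sum>i<M. \<Sum>j<nn i. (x i $ j)\<^sup>2 / H i $$ (j, j) - eps0 * (x i $ j)\<^sup>2)"
    using entry by (intro sum_mono) simp
  also have "\<dots> = (\<Sum>i<M. \<Sum>j<nn i. (x i $ j)\<^sup>2 / H i $$ (j, j)) - eps0 * (\<Sum>i<M. x i \<bullet> x i)"
    unfolding squares by (simp add: sum_subtractf sum_distrib_left)
  finally show ?thesis
    using coupling_cross_term_nonpos[OF C N L x] coupling_gain_bound[OF C N x S gain]
    unfolding sum_subtractf sum.distrib by linarith
qed

section \<open>Lyapunov stability\<close>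

lemma cl_trajD:
  assumes "cl_traj M nn A B F C K N l x" "i < M"
  shows "x t i \<in> carrier_vec (nn i)"
    "x (Suc t) i = (A i + B i * K i) *\<^sub>v x t i + F i *\<^sub>v coupling_input C N l (x t) i"
  using assms unfolding cl_traj_def coupling_input_def by blast+

lemma lyapunov_descent:
  fixes V N :: "nat \<Rightarrow> real"
  assumes V: "\<And>t. 0 \<le> V t" and N: "\<And>t. 0 \<le> N t" and e: "0 < e"
    and descent: "\<And>t. V (Suc t) \<le> V t - e * N t"
  shows "e * N t \<le> V 0" and "N \<longlonglongrightarrow> 0"
proof -
  have telescope: "e * (\<Sum>s<T. N s) \<le> V 0 - V T" for T
  proof (induction T)
    case (Suc T)
    then show ?case using descent[of T] by (simp add: distrib_left)
  qed simp
  have "e * N t \<le> e * (\<Sum>s<Suc t. N s)"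
    using N e by (intro mult_left_mono member_le_sum) auto
  also have "\<dots> \<le> V 0" using telescope[of "Suc t"] V[of "Suc t"] by linarith
  finally show "e * N t \<le> V 0" .
  have "summable N"
  proof (rule bounded_imp_summable)
    show "(\<Sum>s\<le>T. N s) \<le> V 0 / e" for T
      using telescope[of "Suc T"] V[of "Suc T"] e by (simp add: lessThan_Suc_atMost field_simps)
  qed (rule N)
  then show "N \<longlonglongrightarrow> 0" by (rule summable_LIMSEQ_zero)
qed

lemma gnorm_square: "(gnorm M y)\<^sup>2 = (\<Sum>i<M. y i \<bullet> y i)"
  unfolding gnorm_def by (simp add: sum_nonneg scalar_prod_def lessThan_atLeast0 power2_eq_square)

lemma cl_asymp_stable_if_lyapunov:
  fixes V :: "(nat \<Rightarrow> real vec) \<Rightarrow> real"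
  assumes c: "0 < c" and e: "0 < e"
    and bounds: "\<And>x t. cl_traj M nn A B F C K N l x \<Longrightarrow> 0 \<le> V (x t) \<and> V (x t) \<le> c * (gnorm M (x t))\<^sup>2"
    and descent: "\<And>x t. cl_traj M nn A B F C K N l x \<Longrightarrow>
                     V (x (Suc t)) \<le> V (x t) - e * (gnorm M (x t))\<^sup>2"
  shows "cl_asymp_stable M nn A B F C K N l"
proof -
  have gnorm_nonneg: "0 \<le> gnorm M y" for y unfolding gnorm_def by (auto intro!: sum_nonneg)
  have decay: "e * (gnorm M (x t))\<^sup>2 \<le> c * (gnorm M (x 0))\<^sup>2" "(\<lambda>t. (gnorm M (x t))\<^sup>2) \<longlonglongrightarrow> 0"
    if x: "cl_traj M nn A B F C K N l x" for x t
    using lyapunov_descent[of "\<lambda>t. V (x t)" "\<lambda>t. (gnorm M (x t))\<^sup>2" e] bounds[OF x] descent[OF x] e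
    by (auto intro: order_trans)
  show ?thesis unfolding cl_asymp_stable_def
  proof (intro conjI allI impI)
    fix \<epsilon> :: real assume "\<epsilon> > 0"
    show "\<exists>d>0. \<forall>x. cl_traj M nn A B F C K N l x \<longrightarrow> gnorm M (x 0) < d \<longrightarrow> (\<forall>t. gnorm M (x t) < \<epsilon>)"
    proof (intro exI[of _ "\<epsilon> * sqrt (e / c)"] conjI allI impI)
      show "0 < \<epsilon> * sqrt (e / c)" using \<open>\<epsilon> > 0\<close> c e by simp
      fix x t assume x: "cl_traj M nn A B F C K N l x" and small: "gnorm M (x 0) < \<epsilon> * sqrt (e / c)"
      have "(gnorm M (x 0))\<^sup>2 < (\<epsilon> * sqrt (e / c))\<^sup>2"
        using small gnorm_nonneg by (intro power_strict_mono) auto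
      then have "c * (gnorm M (x 0))\<^sup>2 < e * \<epsilon>\<^sup>2"
        using c e by (simp add: field_simps)
      then have "e * (gnorm M (x t))\<^sup>2 < e * \<epsilon>\<^sup>2" using decay(1)[OF x, of t] by linarith
      then have "(gnorm M (x t))\<^sup>2 < \<epsilon>\<^sup>2" using e by simp
      then show "gnorm M (x t) < \<epsilon>" using \<open>\<epsilon> > 0\<close> by (simp add: power_less_imp_less_base)
    qed
  next
    show "\<exists>d>0. \<forall>x. cl_traj M nn A B F C K N l x \<longrightarrow> gnorm M (x 0) < d \<longrightarrow> (\<lambda>t. gnorm M (x t)) \<longlonglongrightarrow> 0"
    proof (intro exI[of _ 1] conjI allI impI)
      fix x assume "cl_traj M nn A B F C K N l x"
      then have "(\<lambda>t. sqrt ((gnorm M (x t))\<^sup>2)) \<longlonglongrightarrow> sqrt 0" by (intro tendsto_real_sqrt decay(2))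
      then show "(\<lambda>t. gnorm M (x t)) \<longlonglongrightarrow> 0" using gnorm_nonneg by simp
    qed simp
  qed
qed

theorem theorem1:
  fixes M m0 :: nat and nn :: "nat \<Rightarrow> nat"
    and A B F C :: "nat \<Rightarrow> real mat"
    and N :: "nat \<Rightarrow> nat set" and l :: "nat \<Rightarrow> nat \<Rightarrow> real"
    and eps0 :: real and eps :: "nat \<Rightarrow> real"
    and S G E H :: "nat \<Rightarrow> real mat"
  assumes M: "M \<ge> 1" and m0: "m0 \<ge> 1"
    and dimA: "\<forall>i<M. A i \<in> carrier_mat (nn i) (nn i)"
    and dimB: "\<forall>i<M. B i \<in> carrier_mat (nn i) m0"
    and dimF: "\<forall>i<M. F i \<in> carrier_mat (nn i) m0"
    and dimC: "\<forall>i<M. C i \<in> carrier_mat m0 (nn i)"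
    and Nsub: "\<forall>i<M. N i \<subseteq> {0..<M} - {i}"
    and Lpsd: "\<forall>w \<in> carrier_vec (M * m0). 0 \<le> w \<bullet> (Ltil M m0 N l *\<^sub>v w)"
    and eps0: "eps0 > 0" and eps: "\<forall>i<M. eps i > 0"
    and dimS: "\<forall>i<M. S i \<in> carrier_mat m0 m0"
    and dimG: "\<forall>i<M. G i \<in> carrier_mat m0 (nn i)"
    and dimE: "\<forall>i<M. E i \<in> carrier_mat (nn i) (nn i)"
    and dimH: "\<forall>i<M. H i \<in> carrier_mat (nn i) (nn i)"
    and Esym: "\<forall>i<M. transpose_mat (E i) = E i"
    and c1: "\<forall>i<M. psd_mat (E i - eps i \<cdot>\<^sub>m 1\<^sub>m (nn i))"
    and c2H: "\<forall>i<M. diagonal_mat (H i) \<and> (\<forall>j<nn i. H i $$ (j, j) > 0)"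
    and c2S: "\<forall>i<M. diagonal_mat (S i) \<and> (\<forall>k<m0. S i $$ (k, k) > 0)"
    and c3: "\<forall>i<M. psd_mat
       (four_block_mat
          (four_block_mat (E i) ((1/2) \<cdot>\<^sub>m (E i * transpose_mat (C i)))
                          ((1/2) \<cdot>\<^sub>m (C i * E i)) ((1/2) \<cdot>\<^sub>m S i + (1/2) \<cdot>\<^sub>m transpose_mat (S i)))
          (four_block_mat (transpose_mat (A i * E i + B i * G i)) (E i)
                          (transpose_mat (F i)) (0\<^sub>m m0 (nn i)))
          (four_block_mat (A i * E i + B i * G i) (F i)
                          (E i) (0\<^sub>m (nn i) m0))
          (four_block_mat (E i) (0\<^sub>m (nn i) (nn i))
                          (0\<^sub>m (nn i) (nn i)) (H i)))"
    and c4: "\<forall>i<M. \<forall>j<nn i. H i $$ (j, j) \<le>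
       1 / (row_norm1 (transpose_mat (Cglob M m0 nn C) * transpose_mat (Ltil M m0 N l))
                      (offs nn i + j) + eps0)"
    and c5: "\<forall>i<M. \<forall>k<m0.
       row_norm1 (Ltil M m0 N l * Cglob M m0 nn C) (i * m0 + k) > 0 \<longrightarrow>
       S i $$ (k, k) \<le> 1 / row_norm1 (Ltil M m0 N l * Cglob M m0 nn C) (i * m0 + k)"
  shows "cl_asymp_stable M nn A B F C (\<lambda>i. G i * mat_inv (E i)) N l"
proof -
  define P where "P i = mat_inv (E i)" for i
  have P: "P i \<in> carrier_mat (nn i) (nn i)" "E i * P i = 1\<^sub>m (nn i)" if "i < M" for i
    using mat_inv_right_inverse_if_psd_shift dimE c1 eps that unfolding P_def by blast+
  define V where "V y = (\<Sum>i<M. y i \<bullet> (P i *\<^sub>v y i))" for y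
  show ?thesis
  proof (rule cl_asymp_stable_if_lyapunov[where V = V and c = "\<Sum>i<M. 1 / eps i"])
    have "{..<M} \<noteq> {}" using M by (simp add: lessThan_empty_iff)
    then show "0 < (\<Sum>i<M. 1 / eps i)" using eps by (intro sum_pos) auto
    fix x t assume traj: "cl_traj M nn A B F C (\<lambda>i. G i * mat_inv (E i)) N l x"
    then have x: "\<forall>i<M. x t i \<in> carrier_vec (nn i)" by (blast dest: cl_trajD(1))
    show "0 \<le> V (x t) \<and> V (x t) \<le> (\<Sum>i<M. 1 / eps i) * (gnorm M (x t))\<^sup>2"
      using quadratic_form_right_inverse_bounds[OF _ P] dimE c1 eps x
      unfolding V_def gnorm_square
      by (auto intro!: sum_nonneg sum_le_sum_inverse_weights scalar_prod_self_nonneg)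
    let ?v = "coupling_input C N l (x t)"
    have "x (Suc t) i \<bullet> (P i *\<^sub>v x (Suc t) i) \<le> x t i \<bullet> (P i *\<^sub>v x t i) + (C i *\<^sub>v x t i) \<bullet> ?v i
        + ?v i \<bullet> (S i *\<^sub>v ?v i) - (\<Sum>j<nn i. (x t i $ j)\<^sup>2 / H i $$ (j, j))"
      if i: "i < M" for i
      unfolding cl_trajD(2)[OF traj i] P_def[symmetric]
      using c3 dimA dimB dimF dimC dimG dimS dimH dimE Esym c2H x i P[OF i]
        coupling_input_carrier[where C = C and i = i, OF dimC[rule_format, OF i]]
      by (auto intro!: closed_loop_dissipation[where E = "E i"]
          simp: lmi_mat_def less_imp_neq[symmetric])
    then have "V (x (Suc t)) \<le> (\<Sum>i<M. x t i \<bullet> (P i *\<^sub>v x t i) + (C i *\<^sub>v x t i) \<bullet> ?v i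
        + ?v i \<bullet> (S i *\<^sub>v ?v i) - (\<Sum>j<nn i. (x t i $ j)\<^sup>2 / H i $$ (j, j)))"
      unfolding V_def by (intro sum_mono) simp
    also have "\<dots> \<le> V (x t) - eps0 * (gnorm M (x t))\<^sup>2"
      using coupling_dissipation[OF dimC Nsub Lpsd x dimS c2S _ c5 c4] c2H
      unfolding V_def gnorm_square sum.distrib sum_subtractf by auto
    finally show "V (x (Suc t)) \<le> V (x t) - eps0 * (gnorm M (x t))\<^sup>2" .
  qed (fact eps0)
qed

end
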